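(* Let $T$ be a regular tournament of odd order $n$, and let $s_5(T)$ be the number of $5$-element vertex subsets of $T$ inducing a strongly connected subtournament. If $n\equiv 3 \pmod 4$, then $$\frac{n(n+1)(n-1)(n-3)(17n-59)}{3840}\le s_5(T),$$ with equality if and only if $T$ is doubly regular or $n=7$ (in which case every regular tournament of order $7$ attains equality). If $n\equiv 1\pmod 4$, then $$\frac{n(n-1)(17n^3-93n^2+127n-243)}{3840}\le s_5(T),$$ with equality if and only if $T$ is nearly doubly regular, or $T$ is isomorphic to $\Delta\cdot\Delta$, or $T$ is isomorphic to one of the two regular tournaments of order $9$ with adjacency matrices $$\begin{pmatrix} 0&1&1&1&1&0&0&0&0\\ 0&0&1&1&1&1&0&0&0\\ 0&0&0&1&0&1&0&1&1\\ 0&0&0&0&1&0&1&1&1\\ 0&0&1&0&0&0&1&1&1\\ 1&0&0&1&1&0&1&0&0\\ 1&1&1&0&0&0&0&1&0\\ 1&1&0&0&0&1&0&0&1\\ 1&1&0&0&0&1&1&0&0\end{pmatrix} \quad\text{and}\quad \begin{pmatrix} 0&1&1&1&1&0&0&0&0\\ 0&0&1&0&1&0&1&1&0\\ 0&0&0&1&1&0&1&0&1\\ 0&1&0&0&0&1&0&1&1\\ 0&0&0&1&0&1&0&1&1\\ 1&1&1&0&0&0&0&0&1\\ 1&0&0&1&1&1&0&0&0\\ 1&0&1&0&0&1&1&0&0\\ 1&1&0&0&0&0&1&1&0\end{pmatrix}.$$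
   Context: A tournament is an orientation of a complete graph; the adjacency matrix has $(i,j)$ entry $1$ iff $i\to j$. A tournament of odd order $n$ is regular if every out-degree is $\delta=\frac{n-1}{2}$. A tournament of even order $m$ is near regular if half its vertices have out-degree $\frac m2$ and half have $\frac m2-1$. For $n\equiv 3\pmod 4$, a regular tournament of order $n$ is doubly regular if the out-set of every vertex induces a regular subtournament (of order $\frac{n-1}{2}$). For $n\equiv 1\pmod 4$, a regular tournament of order $n$ is nearly doubly regular if the out-set of every vertex induces a near regular subtournament. $\Delta$ is the cyclic triple (strong tournament on 3 vertices) and $\Delta\cdot\Delta$ is the tournament of order 9 obtained from $\Delta$ by replacing each vertex by a copy of $\Delta$, with every arc between two distinct copies oriented as the corresponding arc of $\Delta$. *)

theory Defs
  imports Complex_Main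
begin

definition tournament :: "'a set \<Rightarrow> ('a \<Rightarrow> 'a \<Rightarrow> bool) \<Rightarrow> bool" where
  "tournament V A \<longleftrightarrow> finite V \<and> (\<forall>x\<in>V. \<not> A x x) \<and>
     (\<forall>x\<in>V. \<forall>y\<in>V. x \<noteq> y \<longrightarrow> (A x y \<longleftrightarrow> \<not> A y x))"

definition out_set :: "'a set \<Rightarrow> ('a \<Rightarrow> 'a \<Rightarrow> bool) \<Rightarrow> 'a \<Rightarrow> 'a set" where
  "out_set S A x = {y \<in> S. A x y}"

definition outdeg :: "'a set \<Rightarrow> ('a \<Rightarrow> 'a \<Rightarrow> bool) \<Rightarrow> 'a \<Rightarrow> nat" where
  "outdeg S A x = card (out_set S A x)"

definition regular_on :: "'a set \<Rightarrow> ('a \<Rightarrow> 'a \<Rightarrow> bool) \<Rightarrow> bool" where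
  "regular_on S A \<longleftrightarrow> odd (card S) \<and> (\<forall>x\<in>S. outdeg S A x = (card S - 1) div 2)"

definition near_regular_on :: "'a set \<Rightarrow> ('a \<Rightarrow> 'a \<Rightarrow> bool) \<Rightarrow> bool" where
  "near_regular_on S A \<longleftrightarrow> even (card S) \<and>
     card {x \<in> S. outdeg S A x = card S div 2} = card S div 2 \<and>
     card {x \<in> S. outdeg S A x + 1 = card S div 2} = card S div 2"

definition regular_tournament :: "'a set \<Rightarrow> ('a \<Rightarrow> 'a \<Rightarrow> bool) \<Rightarrow> bool" where
  "regular_tournament V A \<longleftrightarrow> tournament V A \<and> regular_on V A"

definition doubly_regular :: "'a set \<Rightarrow> ('a \<Rightarrow> 'a \<Rightarrow> bool) \<Rightarrow> bool" where
  "doubly_regular V A \<longleftrightarrow> regular_tournament V A \<and> card V mod 4 = 3 \<and>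
     (\<forall>v\<in>V. regular_on (out_set V A v) A)"

definition nearly_doubly_regular :: "'a set \<Rightarrow> ('a \<Rightarrow> 'a \<Rightarrow> bool) \<Rightarrow> bool" where
  "nearly_doubly_regular V A \<longleftrightarrow> regular_tournament V A \<and> card V mod 4 = 1 \<and>
     (\<forall>v\<in>V. near_regular_on (out_set V A v) A)"

definition strong_on :: "'a set \<Rightarrow> ('a \<Rightarrow> 'a \<Rightarrow> bool) \<Rightarrow> bool" where
  "strong_on S A \<longleftrightarrow> (\<forall>x\<in>S. \<forall>y\<in>S. (\<lambda>u w. u \<in> S \<and> w \<in> S \<and> A u w)\<^sup>*\<^sup>* x y)"

definition s5 :: "'a set \<Rightarrow> ('a \<Rightarrow> 'a \<Rightarrow> bool) \<Rightarrow> nat" where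
  "s5 V A = card {S. S \<subseteq> V \<and> card S = 5 \<and> strong_on S A}"

definition tourn_iso :: "'a set \<Rightarrow> ('a \<Rightarrow> 'a \<Rightarrow> bool) \<Rightarrow> 'b set \<Rightarrow> ('b \<Rightarrow> 'b \<Rightarrow> bool) \<Rightarrow> bool" where
  "tourn_iso V A W B \<longleftrightarrow> (\<exists>f. bij_betw f V W \<and> (\<forall>x\<in>V. \<forall>y\<in>V. A x y \<longleftrightarrow> B (f x) (f y)))"

text \<open>Delta.Delta: vertices (i,j) with i,j in {0,1,2}; cyclic triple i -> i+1 mod 3.\<close>
definition cyc3 :: "nat \<Rightarrow> nat \<Rightarrow> bool" where
  "cyc3 i j \<longleftrightarrow> j = (i + 1) mod 3"

definition DD_V :: "(nat \<times> nat) set" where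
  "DD_V = {0..2} \<times> {0..2}"

definition DD_A :: "nat \<times> nat \<Rightarrow> nat \<times> nat \<Rightarrow> bool" where
  "DD_A p q \<longleftrightarrow> (if fst p = fst q then cyc3 (snd p) (snd q) else cyc3 (fst p) (fst q))"

definition M1 :: "nat list list" where
  "M1 = [[0,1,1,1,1,0,0,0,0],
         [0,0,1,1,1,1,0,0,0],
         [0,0,0,1,0,1,0,1,1],
         [0,0,0,0,1,0,1,1,1],
         [0,0,1,0,0,0,1,1,1],
         [1,0,0,1,1,0,1,0,0],
         [1,1,1,0,0,0,0,1,0],
         [1,1,0,0,0,1,0,0,1],
         [1,1,0,0,0,1,1,0,0]]"

definition M2 :: "nat list list" where
  "M2 = [[0,1,1,1,1,0,0,0,0],
         [0,0,1,0,1,0,1,1,0],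
         [0,0,0,1,1,0,1,0,1],
         [0,1,0,0,0,1,0,1,1],
         [0,0,0,1,0,1,0,1,1],
         [1,1,1,0,0,0,0,0,1],
         [1,0,0,1,1,1,0,0,0],
         [1,0,1,0,0,1,1,0,0],
         [1,1,0,0,0,0,1,1,0]]"

definition mat_rel :: "nat list list \<Rightarrow> nat \<Rightarrow> nat \<Rightarrow> bool" where
  "mat_rel M i j \<longleftrightarrow> M ! i ! j = 1"

end

(*
  A 5-subset of a tournament is strong iff it has neither a source nor a sink. Counting the
  5-subsets with a source, with a sink, and with both (through the arc from the source to the
  sink) gives, for a regular tournament of order n = 2d + 1,
    s5 = C(n,5) - 2n C(d,4) + sum over all arcs u -> w of C(x(u,w), 3),
  where x(u,w) is the number of vertices v with u -> v -> w. The number of arcs and the sum of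
  the x(u,w) only depend on n, so by discrete convexity of C(x,3) the sum is smallest when all
  x(u,w) are as close as possible to their mean (d - 1)/2. As x(u,w) = d - 1 - (out-degree of w
  in the out-set of u), this happens exactly when all out-sets are regular, resp. near regular.
  Further equality cases come from C(x,3) vanishing on {0, 1, 2}: for n = 7 every regular
  tournament is extremal, and for n = 9 the extremal ones are those in which every arc has a
  common out-neighbour. These are classified by putting such a tournament that is not nearly
  doubly regular into a normal form around an arc with x(u,w) = 0 and checking the finitely
  many completions.
*)
theory Submission
  imports Defs
begin

definition is_source :: "'a set \<Rightarrow> ('a \<Rightarrow> 'a \<Rightarrow> bool) \<Rightarrow> 'a \<Rightarrow> bool" where
  "is_source S A s \<longleftrightarrow> s \<in> S \<and> (\<forall>t\<in>S. t \<noteq> s \<longrightarrow> A s t)"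

definition arcs :: "'a set \<Rightarrow> ('a \<Rightarrow> 'a \<Rightarrow> bool) \<Rightarrow> ('a \<times> 'a) set" where
  "arcs V A = {(u, w). u \<in> V \<and> w \<in> V \<and> A u w}"

definition between :: "'a set \<Rightarrow> ('a \<Rightarrow> 'a \<Rightarrow> bool) \<Rightarrow> 'a \<times> 'a \<Rightarrow> 'a set" where
  "between V A p = {v \<in> V. A (fst p) v \<and> A v (snd p)}"

section \<open>Tournaments\<close>

lemma tournament_finite: "tournament V A \<Longrightarrow> finite V"
  unfolding tournament_def by blast

lemma tournament_irrefl: "tournament V A \<Longrightarrow> x \<in> V \<Longrightarrow> \<not> A x x"
  unfolding tournament_def by blast

lemma tournament_arc_iff:
  "tournament V A \<Longrightarrow> x \<in> V \<Longrightarrow> y \<in> V \<Longrightarrow> x \<noteq> y \<Longrightarrow> A y x \<longleftrightarrow> \<not> A x y"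
  unfolding tournament_def by blast

lemma tournament_asym: "tournament V A \<Longrightarrow> x \<in> V \<Longrightarrow> y \<in> V \<Longrightarrow> A x y \<Longrightarrow> \<not> A y x"
  unfolding tournament_def by metis

lemma tournament_subset: "tournament V A \<Longrightarrow> S \<subseteq> V \<Longrightarrow> tournament S A"
  unfolding tournament_def by (meson finite_subset subsetD)

lemma tournament_conversep: "tournament V A \<Longrightarrow> tournament V A\<inverse>\<inverse>"
  unfolding tournament_def conversep_iff by blast

lemma outdeg_add_indeg:
  assumes T: "tournament V A" and v: "v \<in> V"
  shows "outdeg V A v + outdeg V A\<inverse>\<inverse> v + 1 = card V"
proof -
  have fin: "finite V" using tournament_finite[OF T] .
  have union: "out_set V A v \<union> out_set V A\<inverse>\<inverse> v = V - {v}"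
    and disjoint: "out_set V A v \<inter> out_set V A\<inverse>\<inverse> v = {}"
    using tournament_arc_iff[OF T _ v] tournament_irrefl[OF T v] v unfolding out_set_def by auto
  have "finite (out_set V A v)" "finite (out_set V A\<inverse>\<inverse> v)"
    using fin by (simp_all add: out_set_def)
  from card_Un_disjoint[OF this disjoint]
  have "outdeg V A v + outdeg V A\<inverse>\<inverse> v = card (V - {v})"
    unfolding outdeg_def union by simp
  with card_Suc_Diff1[OF fin v] show ?thesis by simp
qed

lemma card_arcs: "finite V \<Longrightarrow> card (arcs V A) = (\<Sum>v\<in>V. outdeg V A v)"
proof -
  assume "finite V"
  moreover have "arcs V A = Sigma V (out_set V A)"
    unfolding arcs_def out_set_def by auto
  ultimately show ?thesis
    unfolding outdeg_def by (simp add: card_SigmaI out_set_def)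
qed

lemma finite_arcs: "finite V \<Longrightarrow> finite (arcs V A)"
  unfolding arcs_def by (rule finite_subset[of _ "V \<times> V"]) auto

lemma sum_outdeg:
  assumes T: "tournament V A"
  shows "(\<Sum>v\<in>V. outdeg V A v) = card V choose 2"
proof -
  have fin: "finite V" using tournament_finite[OF T] .
  have "bij_betw (\<lambda>(u, w). {u, w}) (arcs V A) {E. E \<subseteq> V \<and> card E = 2}"
  proof (rule bij_betwI')
    fix p q assume "p \<in> arcs V A" "q \<in> arcs V A"
    then show "((\<lambda>(u, w). {u, w}) p = (\<lambda>(u, w). {u, w}) q) = (p = q)"
      unfolding arcs_def by (auto simp: doubleton_eq_iff dest: tournament_asym[OF T])
  next
    fix p assume "p \<in> arcs V A"
    then show "(\<lambda>(u, w). {u, w}) p \<in> {E. E \<subseteq> V \<and> card E = 2}"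
      using tournament_irrefl[OF T] unfolding arcs_def by (auto simp: card_insert_if)
  next
    fix E assume "E \<in> {E. E \<subseteq> V \<and> card E = 2}"
    then obtain u w where "E = {u, w}" "u \<noteq> w" "u \<in> V" "w \<in> V"
      by (auto simp: card_2_iff)
    moreover have "A u w \<or> A w u" using tournament_arc_iff[OF T] calculation by blast
    ultimately show "\<exists>p\<in>arcs V A. E = (\<lambda>(u, w). {u, w}) p"
      unfolding arcs_def by (auto intro!: bexI[of _ "(u, w)"] bexI[of _ "(w, u)"])
  qed
  then have "card (arcs V A) = card V choose 2"
    using n_subsets[OF fin] by (simp add: bij_betw_same_card)
  then show ?thesis using card_arcs[OF fin] by simp
qed

section \<open>Strong 5-subsets\<close>

lemma source_unique:
  "tournament V A \<Longrightarrow> S \<subseteq> V \<Longrightarrow> is_source S A s \<Longrightarrow> is_source S A s' \<Longrightarrow> s = s'"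
  unfolding is_source_def by (metis subsetD tournament_arc_iff)

lemma small_tournament_has_source:
  assumes T: "tournament S A" and "S \<noteq> {}" "card S \<le> 2"
  obtains s where "is_source S A s"
proof -
  have "finite S" using tournament_finite[OF T] .
  then have "card S \<noteq> 0" using assms(2) by simp
  then have "card S = 1 \<or> card S = 2" using assms(3) by presburger
  then show ?thesis
  proof
    assume "card S = 1"
    then obtain s where "S = {s}" by (auto simp: card_1_singleton_iff)
    then show ?thesis using that unfolding is_source_def by auto
  next
    assume "card S = 2"
    then obtain u w where S: "S = {u, w}" "u \<noteq> w" by (auto simp: card_2_iff)
    then have "A u w \<or> A w u" using tournament_arc_iff[OF T] by blast
    then show ?thesis using that S unfolding is_source_def by auto
  qed
qed

lemma strong_on_conversep: "strong_on S A \<Longrightarrow> strong_on S A\<inverse>\<inverse>"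
proof -
  have "(\<lambda>u w. u \<in> S \<and> w \<in> S \<and> A\<inverse>\<inverse> u w) = (\<lambda>u w. u \<in> S \<and> w \<in> S \<and> A u w)\<inverse>\<inverse>"
    by auto
  then show "strong_on S A \<Longrightarrow> strong_on S A\<inverse>\<inverse>"
    unfolding strong_on_def by (simp add: rtranclp_conversep)
qed

lemma strong_on_no_source:
  assumes T: "tournament S A" and card: "2 \<le> card S" and strong: "strong_on S A"
  shows "\<not> is_source S A s"
proof
  assume s: "is_source S A s"
  have "\<not> S \<subseteq> {s}" using card card_mono[of "{s}" S] by auto
  then obtain t where "t \<in> S" "t \<noteq> s" by blast
  moreover have "(\<lambda>u w. u \<in> S \<and> w \<in> S \<and> A u w)\<^sup>*\<^sup>* t s"
    using strong \<open>t \<in> S\<close> s unfolding strong_on_def is_source_def by blast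
  then have "t = s" using s
    by (induction rule: rtranclp_induct) (auto simp: is_source_def dest: tournament_asym[OF T])
  ultimately show False by blast
qed

lemma no_source_no_sink_imp_strong_on:
  assumes T: "tournament S A" and card: "card S \<le> 5"
    and no_source: "\<nexists>s. is_source S A s" and no_sink: "\<nexists>s. is_source S A\<inverse>\<inverse> s"
  shows "strong_on S A"
  unfolding strong_on_def
proof (intro ballI, rule ccontr)
  let ?R = "\<lambda>u w. u \<in> S \<and> w \<in> S \<and> A u w"
  fix x y assume xy: "x \<in> S" "y \<in> S" and "\<not> ?R\<^sup>*\<^sup>* x y"
  define Rx where "Rx = {z \<in> S. ?R\<^sup>*\<^sup>* x z}"
  have "x \<in> Rx" "y \<in> S - Rx" "Rx \<subseteq> S"
    using xy \<open>\<not> ?R\<^sup>*\<^sup>* x y\<close> unfolding Rx_def by auto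
  have into: "A t r" if "r \<in> Rx" "t \<in> S - Rx" for r t
    using that tournament_arc_iff[OF T, of r t] rtranclp.rtrancl_into_rtrancl[of ?R x r t]
    unfolding Rx_def by auto
  have "card Rx + card (S - Rx) = card S"
    using \<open>Rx \<subseteq> S\<close> tournament_finite[OF T]
    by (metis card_Diff_subset card_mono finite_subset le_add_diff_inverse)
  then consider "card Rx \<le> 2" | "card (S - Rx) \<le> 2" using card by linarith
  then show False
  proof cases
    case 1
    obtain s where "is_source Rx A\<inverse>\<inverse> s"
      using small_tournament_has_source[OF tournament_conversep[OF tournament_subset[OF T]] _ 1]
        \<open>Rx \<subseteq> S\<close> \<open>x \<in> Rx\<close> by blast
    then have "is_source S A\<inverse>\<inverse> s" using into \<open>Rx \<subseteq> S\<close> unfolding is_source_def by auto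
    with no_sink show False by blast
  next
    case 2
    obtain s where "is_source (S - Rx) A s"
      using small_tournament_has_source[OF tournament_subset[OF T] _ 2] \<open>y \<in> S - Rx\<close> by blast
    then have "is_source S A s" using into unfolding is_source_def by auto
    with no_source show False by blast
  qed
qed

lemma strong_on_iff_no_source_no_sink:
  assumes T: "tournament S A" and "2 \<le> card S" "card S \<le> 5"
  shows "strong_on S A \<longleftrightarrow> (\<nexists>s. is_source S A s) \<and> (\<nexists>s. is_source S A\<inverse>\<inverse> s)"
  using strong_on_no_source[OF T] strong_on_no_source[OF tournament_conversep[OF T]]
    strong_on_conversep no_source_no_sink_imp_strong_on[OF T] assms(2,3)
  by blast

lemma card_subsets_with_source_at:
  assumes T: "tournament V A" and v: "v \<in> V"
  shows "card {S. S \<subseteq> V \<and> card S = Suc k \<and> is_source S A v} = outdeg V A v choose k"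
proof -
  have fin: "finite V" using tournament_finite[OF T] .
  let ?F = "{S. S \<subseteq> V \<and> card S = Suc k \<and> is_source S A v}"
  let ?K = "{K. K \<subseteq> out_set V A v \<and> card K = k}"
  have v_out: "v \<notin> out_set V A v" using tournament_irrefl[OF T v] by (simp add: out_set_def)
  have "bij_betw (\<lambda>S. S - {v}) ?F ?K"
  proof (rule bij_betw_byWitness[where f' = "insert v"])
    show "\<forall>S\<in>?F. insert v (S - {v}) = S" by (auto simp: is_source_def)
    show "\<forall>K\<in>?K. insert v K - {v} = K" using v_out by auto
    show "(\<lambda>S. S - {v}) ` ?F \<subseteq> ?K"
      using fin by (auto simp: is_source_def out_set_def dest: finite_subset)
    show "insert v ` ?K \<subseteq> ?F"
    proof
      fix S assume "S \<in> insert v ` ?K"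
      then obtain K where K: "K \<subseteq> out_set V A v" "card K = k" "S = insert v K" by blast
      then have "finite K" "v \<notin> K" using fin v_out by (auto simp: out_set_def intro: finite_subset)
      with K v show "S \<in> ?F" by (auto simp: is_source_def out_set_def)
    qed
  qed
  then show ?thesis
    unfolding outdeg_def using fin by (simp add: bij_betw_same_card n_subsets out_set_def)
qed

lemma card_subsets_with_source:
  assumes T: "tournament V A"
  shows "card {S. S \<subseteq> V \<and> card S = Suc k \<and> (\<exists>s. is_source S A s)} = (\<Sum>v\<in>V. outdeg V A v choose k)"
proof -
  have fin: "finite V" using tournament_finite[OF T] .
  let ?F = "\<lambda>v. {S. S \<subseteq> V \<and> card S = Suc k \<and> is_source S A v}"
  have "{S. S \<subseteq> V \<and> card S = Suc k \<and> (\<exists>s. is_source S A s)} = (\<Union>v\<in>V. ?F v)"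
    unfolding is_source_def by auto
  moreover have "card (\<Union>v\<in>V. ?F v) = (\<Sum>v\<in>V. card (?F v))"
    using fin source_unique[OF T]
    by (intro card_UN_disjoint) (auto intro: finite_subset[of _ "Pow V"])
  ultimately show ?thesis
    using card_subsets_with_source_at[OF T] by simp
qed

lemma source_sink_arc:
  assumes T: "tournament V A" and S: "S \<subseteq> V" "2 \<le> card S"
    and st: "is_source S A s" "is_source S A\<inverse>\<inverse> t"
  shows "(s, t) \<in> arcs V A"
proof -
  have "s \<in> S" "t \<in> S" using st by (simp_all add: is_source_def)
  have "s \<noteq> t"
  proof
    assume "s = t"
    have "\<not> S \<subseteq> {s}" using S card_mono[of "{s}" S] by auto
    then obtain x where "x \<in> S" "x \<noteq> s" by blast
    then have "A s x" "A x s" using st \<open>s = t\<close> by (auto simp: is_source_def)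
    then show False using tournament_asym[OF T] S(1) \<open>s \<in> S\<close> \<open>x \<in> S\<close> by blast
  qed
  then show ?thesis using st S unfolding is_source_def arcs_def by auto
qed

lemma card_subsets_with_source_and_sink_at:
  assumes T: "tournament V A" and uw: "(u, w) \<in> arcs V A"
  shows "card {S. S \<subseteq> V \<and> card S = Suc (Suc k) \<and> is_source S A u \<and> is_source S A\<inverse>\<inverse> w}
           = card (between V A (u, w)) choose k"
proof -
  have fin: "finite V" using tournament_finite[OF T] .
  let ?F = "{S. S \<subseteq> V \<and> card S = Suc (Suc k) \<and> is_source S A u \<and> is_source S A\<inverse>\<inverse> w}"
  let ?K = "{K. K \<subseteq> between V A (u, w) \<and> card K = k}"
  have uw': "u \<noteq> w" "u \<notin> between V A (u, w)" "w \<notin> between V A (u, w)"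
    using uw tournament_irrefl[OF T] unfolding arcs_def between_def by auto
  have "bij_betw (\<lambda>S. S - {u, w}) ?F ?K"
  proof (rule bij_betw_byWitness[where f' = "\<lambda>K. insert u (insert w K)"])
    show "\<forall>S\<in>?F. insert u (insert w (S - {u, w})) = S" by (auto simp: is_source_def)
    show "\<forall>K\<in>?K. insert u (insert w K) - {u, w} = K" using uw' by auto
    show "(\<lambda>S. S - {u, w}) ` ?F \<subseteq> ?K"
      using fin uw' by (auto simp: is_source_def between_def dest: finite_subset)
    show "(\<lambda>K. insert u (insert w K)) ` ?K \<subseteq> ?F"
    proof
      fix S assume "S \<in> (\<lambda>K. insert u (insert w K)) ` ?K"
      then obtain K where K: "K \<subseteq> between V A (u, w)" "card K = k" "S = insert u (insert w K)"
        by blast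
      then have "finite K" "u \<notin> K" "w \<notin> K"
        using fin uw' by (auto simp: between_def intro: finite_subset)
      with K uw uw' show "S \<in> ?F" by (auto simp: is_source_def between_def arcs_def)
    qed
  qed
  then show ?thesis
    using fin by (simp add: bij_betw_same_card n_subsets between_def)
qed

lemma card_subsets_with_source_and_sink:
  assumes T: "tournament V A"
  shows "card {S. S \<subseteq> V \<and> card S = Suc (Suc k) \<and> (\<exists>s. is_source S A s) \<and> (\<exists>t. is_source S A\<inverse>\<inverse> t)}
           = (\<Sum>p\<in>arcs V A. card (between V A p) choose k)"
proof -
  have fin: "finite V" using tournament_finite[OF T] .
  let ?F = "\<lambda>(u, w). {S. S \<subseteq> V \<and> card S = Suc (Suc k) \<and> is_source S A u \<and> is_source S A\<inverse>\<inverse> w}"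
  have "{S. S \<subseteq> V \<and> card S = Suc (Suc k) \<and> (\<exists>s. is_source S A s) \<and> (\<exists>t. is_source S A\<inverse>\<inverse> t)}
          = (\<Union>p\<in>arcs V A. ?F p)" (is "?L = _")
  proof (intro set_eqI iffI)
    fix S assume "S \<in> ?L"
    then obtain s t where "S \<subseteq> V" "card S = Suc (Suc k)" "is_source S A s" "is_source S A\<inverse>\<inverse> t"
      by blast
    then show "S \<in> (\<Union>p\<in>arcs V A. ?F p)"
      using source_sink_arc[OF T] by (intro UN_I[of "(s, t)"]) auto
  qed auto
  moreover have "card (\<Union>p\<in>arcs V A. ?F p) = (\<Sum>p\<in>arcs V A. card (?F p))"
  proof (rule card_UN_disjoint)
    show "finite (arcs V A)"
      using fin by (simp add: finite_arcs)
    show "\<forall>p\<in>arcs V A. finite (?F p)"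
      using fin by (auto intro: finite_subset[of _ "Pow V"])
    show "\<forall>p\<in>arcs V A. \<forall>q\<in>arcs V A. p \<noteq> q \<longrightarrow> ?F p \<inter> ?F q = {}"
      using source_unique[OF T] source_unique[OF tournament_conversep[OF T]] by fastforce
  qed
  ultimately show ?thesis
    using card_subsets_with_source_and_sink_at[OF T] by (simp add: case_prod_beta)
qed

theorem s5_inclusion_exclusion:
  assumes T: "tournament V A"
  shows "s5 V A + (\<Sum>v\<in>V. outdeg V A v choose 4) + (\<Sum>v\<in>V. outdeg V A\<inverse>\<inverse> v choose 4)
           = (card V choose 5) + (\<Sum>p\<in>arcs V A. card (between V A p) choose 3)"
proof -
  have fin: "finite V" using tournament_finite[OF T] .
  let ?P = "{S. S \<subseteq> V \<and> card S = 5}"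
  let ?Src = "{S. S \<subseteq> V \<and> card S = 5 \<and> (\<exists>s. is_source S A s)}"
  let ?Snk = "{S. S \<subseteq> V \<and> card S = 5 \<and> (\<exists>t. is_source S A\<inverse>\<inverse> t)}"
  have finP: "finite ?P" using fin by (simp add: finite_Collect_subsets)
  have "{S. S \<subseteq> V \<and> card S = 5 \<and> strong_on S A} = ?P - (?Src \<union> ?Snk)"
    using strong_on_iff_no_source_no_sink[OF tournament_subset[OF T]] by auto
  moreover have U: "?Src \<union> ?Snk \<subseteq> ?P" by blast
  ultimately have "s5 V A + card (?Src \<union> ?Snk) = card ?P"
    unfolding s5_def using card_Diff_subset[OF finite_subset[OF U finP] U] card_mono[OF finP U]
    by simp
  moreover have "finite ?Src" "finite ?Snk" by (rule rev_finite_subset[OF finP]; blast)+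
  then have "card (?Src \<union> ?Snk) + card (?Src \<inter> ?Snk) = card ?Src + card ?Snk"
    by (rule card_Un_Int[symmetric])
  moreover have "card ?Src = (\<Sum>v\<in>V. outdeg V A v choose 4)"
    using card_subsets_with_source[OF T, of 4] by simp
  moreover have "card ?Snk = (\<Sum>v\<in>V. outdeg V A\<inverse>\<inverse> v choose 4)"
    using card_subsets_with_source[OF tournament_conversep[OF T], of 4] by simp
  moreover have "?Src \<inter> ?Snk = {S. S \<subseteq> V \<and> card S = Suc (Suc 3)
                                     \<and> (\<exists>s. is_source S A s) \<and> (\<exists>t. is_source S A\<inverse>\<inverse> t)}"
    by auto
  ultimately show ?thesis
    using card_subsets_with_source_and_sink[OF T, of 3] n_subsets[OF fin, of 5] by simp
qed

section \<open>Regular tournaments\<close>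

lemma between_eq_out_set: "between V A (u, w) = out_set (out_set V A u) A\<inverse>\<inverse> w"
  unfolding between_def out_set_def by auto

lemma card_between_add_outdeg:
  assumes T: "tournament V A" and uw: "(u, w) \<in> arcs V A"
  shows "card (between V A (u, w)) + outdeg (out_set V A u) A w + 1 = outdeg V A u"
proof -
  have "tournament (out_set V A u) A" "w \<in> out_set V A u"
    using tournament_subset[OF T] uw by (auto simp: arcs_def out_set_def)
  from outdeg_add_indeg[OF this]
  show ?thesis
    unfolding between_eq_out_set outdeg_def by simp
qed

lemma sum_card_between:
  assumes T: "tournament V A"
  shows "(\<Sum>p\<in>arcs V A. card (between V A p)) = (\<Sum>u\<in>V. outdeg V A u choose 2)"
proof -
  have fin: "finite V" using tournament_finite[OF T] .
  have "arcs V A = Sigma V (out_set V A)"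
    unfolding arcs_def out_set_def by auto
  moreover have "(\<Sum>u\<in>V. \<Sum>w\<in>out_set V A u. card (between V A (u, w)))
               = (\<Sum>p\<in>Sigma V (out_set V A). card (between V A p))"
  proof -
    have "\<forall>u\<in>V. finite (out_set V A u)" using fin by (simp add: out_set_def)
    from sum.Sigma[OF fin this, of "\<lambda>u w. card (between V A (u, w))"]
    show ?thesis by (simp add: case_prod_eta)
  qed
  ultimately have "(\<Sum>p\<in>arcs V A. card (between V A p))
               = (\<Sum>u\<in>V. \<Sum>w\<in>out_set V A u. card (between V A (u, w)))"
    by simp
  also have "\<dots> = (\<Sum>u\<in>V. outdeg V A u choose 2)"
  proof (rule sum.cong[OF refl])
    fix u assume "u \<in> V"
    have "tournament (out_set V A u) A\<inverse>\<inverse>"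
      using tournament_conversep[OF tournament_subset[OF T]] by (auto simp: out_set_def)
    from sum_outdeg[OF this]
    show "(\<Sum>w\<in>out_set V A u. card (between V A (u, w))) = outdeg V A u choose 2"
      unfolding between_eq_out_set outdeg_def .
  qed
  finally show ?thesis .
qed

lemma regular_tournament_tournament: "regular_tournament V A \<Longrightarrow> tournament V A"
  by (simp add: regular_tournament_def)

lemma regular_tournament_outdeg:
  "regular_tournament V A \<Longrightarrow> card V = 2 * d + 1 \<Longrightarrow> v \<in> V \<Longrightarrow> outdeg V A v = d"
  unfolding regular_tournament_def regular_on_def by simp

lemma regular_tournament_indeg:
  assumes "regular_tournament V A" "card V = 2 * d + 1" "v \<in> V"
  shows "outdeg V A\<inverse>\<inverse> v = d"
  using outdeg_add_indeg[of V A v] regular_tournament_outdeg[OF assms] assms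
  unfolding regular_tournament_def by simp

lemma
  assumes R: "regular_tournament V A" and n: "card V = 2 * d + 1"
  shows s5_regular: "s5 V A + 2 * card V * (d choose 4)
                       = (card V choose 5) + (\<Sum>p\<in>arcs V A. card (between V A p) choose 3)"
    and sum_card_between_regular: "(\<Sum>p\<in>arcs V A. card (between V A p)) = card V * (d choose 2)"
    and card_arcs_regular: "card (arcs V A) = card V * d"
    and card_between_regular:
      "(u, w) \<in> arcs V A \<Longrightarrow> card (between V A (u, w)) + outdeg (out_set V A u) A w + 1 = d"
proof -
  have T: "tournament V A" using regular_tournament_tournament[OF R] .
  note out = regular_tournament_outdeg[OF R n] and "in" = regular_tournament_indeg[OF R n]
  show "s5 V A + 2 * card V * (d choose 4)
          = (card V choose 5) + (\<Sum>p\<in>arcs V A. card (between V A p) choose 3)"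
    using s5_inclusion_exclusion[OF T] by (simp add: out "in")
  show "(\<Sum>p\<in>arcs V A. card (between V A p)) = card V * (d choose 2)"
    using sum_card_between[OF T] by (simp add: out)
  show "card (arcs V A) = card V * d"
    using card_arcs[OF tournament_finite[OF T]] by (simp add: out)
  show "(u, w) \<in> arcs V A \<Longrightarrow> card (between V A (u, w)) + outdeg (out_set V A u) A w + 1 = d"
    using card_between_add_outdeg[OF T] out by (auto simp: arcs_def)
qed

lemma real_choose_eq_prod: "fact k * real (n choose k) = (\<Prod>i<k. real n - real i)"
  using gbinomial_mult_fact[of k "real n"] by (simp add: binomial_gbinomial atLeast0LessThan)

lemma real_choose_2: "real (n choose 2) = real n * (real n - 1) / 2"
  using real_choose_eq_prod[of 2 n] by (simp add: eval_nat_numeral field_simps)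

lemma real_choose_3: "real (n choose 3) = real n * (real n - 1) * (real n - 2) / 6"
  using real_choose_eq_prod[of 3 n] by (simp add: eval_nat_numeral field_simps)

lemma real_choose_4: "real (n choose 4) = real n * (real n - 1) * (real n - 2) * (real n - 3) / 24"
  using real_choose_eq_prod[of 4 n] by (simp add: eval_nat_numeral field_simps)

lemma real_choose_5:
  "real (n choose 5) = real n * (real n - 1) * (real n - 2) * (real n - 3) * (real n - 4) / 120"
  using real_choose_eq_prod[of 5 n] by (simp add: eval_nat_numeral field_simps)

section \<open>The lower bounds and their equality cases\<close>

text \<open>6 binom(x, 3) minus a line meeting it at the mean m of card (between V A p) over all
  arcs (n = 4m + 3), resp. at m - 1 and m, the integers next to that mean (n = 4m + 1). As the
  number of arcs and the sum of card (between V A p) are fixed, summing these excesses over the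
  arcs gives 6 (s5 - bound).\<close>
definition excess_3mod4 :: "nat \<Rightarrow> nat \<Rightarrow> real" where
  "excess_3mod4 m x = (real x - real m) * ((real x - real m) * (real x + 2 * real m - 3) - 1)"

definition excess_1mod4 :: "nat \<Rightarrow> nat \<Rightarrow> real" where
  "excess_1mod4 m x = (real x - real m) * (real x - real m + 1) * (real x + 2 * real m - 4)"

lemma excess_3mod4_expand:
  "excess_3mod4 m x
     = 6 * real (x choose 3) - real m * (real m - 1) * (real m - 2)
         - 3 * (real m - 1)^2 * (real x - real m)"
  unfolding excess_3mod4_def real_choose_3
  by (simp add: field_simps power2_eq_square; simp add: algebra_simps)

lemma excess_1mod4_expand:
  "excess_1mod4 m x
     = 6 * real (x choose 3) - (real m - 1) * (real m - 2) * (real m - 3)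
         - 3 * (real m - 1) * (real m - 2) * (real x - (real m - 1))"
  unfolding excess_1mod4_def real_choose_3
  by (simp add: field_simps; simp add: algebra_simps)

lemma excess_3mod4_sign:
  assumes "x \<le> 2 * m"
  shows "0 \<le> excess_3mod4 m x" and "excess_3mod4 m x = 0 \<longleftrightarrow> x = m \<or> m = 1"
proof -
  define t where "t = real x - real m"
  have e: "excess_3mod4 m x = t * (t * (t + 3 * real m - 3) - 1)"
    unfolding excess_3mod4_def t_def by (simp add: algebra_simps)
  consider "x = m" | "m = 1" | "m < x" "2 \<le> m" | "x < m" "2 \<le> m"
    using assms by linarith
  then have "0 \<le> excess_3mod4 m x \<and> (excess_3mod4 m x = 0 \<longleftrightarrow> x = m \<or> m = 1)"
  proof cases
    case 2
    with assms have "x = 0 \<or> x = 1 \<or> x = 2" by auto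
    with 2 show ?thesis unfolding excess_3mod4_def by auto
  next
    case 3
    then have "1 \<le> t" "4 \<le> t + 3 * real m - 3" unfolding t_def by linarith+
    then have "4 \<le> t * (t + 3 * real m - 3)"
      using mult_mono[of 1 t 4 "t + 3 * real m - 3"] by simp
    with \<open>1 \<le> t\<close> have "0 < excess_3mod4 m x" unfolding e by simp
    with 3 show ?thesis by simp
  next
    case 4
    then have "t \<le> -1" "0 \<le> t + 3 * real m - 3" unfolding t_def by linarith+
    then have "t * (t + 3 * real m - 3) - 1 < 0" by (smt (verit) mult_nonpos_nonneg)
    with \<open>t \<le> -1\<close> have "0 < excess_3mod4 m x" unfolding e by (simp add: mult_neg_neg)
    with 4 show ?thesis by simp
  qed (simp add: excess_3mod4_def)
  then show "0 \<le> excess_3mod4 m x" and "excess_3mod4 m x = 0 \<longleftrightarrow> x = m \<or> m = 1"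
    by simp_all
qed

lemma excess_1mod4_sign:
  assumes "x < 2 * m"
  shows "0 \<le> excess_1mod4 m x"
    and "excess_1mod4 m x = 0 \<longleftrightarrow> x + 1 = m \<or> x = m \<or> (m = 2 \<and> x = 0)"
proof -
  define c where "c = (real x - real m) * (real x - real m + 1)"
  have e: "excess_1mod4 m x = c * (real x + 2 * real m - 4)"
    unfolding excess_1mod4_def c_def by simp
  text \<open>c is a product of two consecutive integers.\<close>
  have c_nonneg: "0 \<le> c"
    unfolding c_def by (cases "m \<le> x") (simp_all add: mult_nonpos_nonpos)
  have c_zero: "c = 0 \<longleftrightarrow> x + 1 = m \<or> x = m"
    unfolding c_def mult_eq_0_iff by (smt (verit) of_nat_1 of_nat_add of_nat_eq_iff)
  have "real x + 2 * real m - 4 = 0 \<longleftrightarrow> real (x + 2 * m) = real (4::nat)"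
    by simp
  also have "\<dots> \<longleftrightarrow> x + 2 * m = 4"
    by (rule of_nat_eq_iff)
  also have "\<dots> \<longleftrightarrow> m = 2 \<and> x = 0"
    using assms by presburger
  finally have linear_zero: "real x + 2 * real m - 4 = 0 \<longleftrightarrow> m = 2 \<and> x = 0" .
  have "0 \<le> real x + 2 * real m - 4 \<or> c = 0"
    using assms c_zero by linarith
  then show "0 \<le> excess_1mod4 m x"
    unfolding e using c_nonneg by auto
  show "excess_1mod4 m x = 0 \<longleftrightarrow> x + 1 = m \<or> x = m \<or> (m = 2 \<and> x = 0)"
    unfolding e using c_zero linear_zero by auto
qed

lemma sum_diff_affine:
  fixes f g :: "'b \<Rightarrow> real"
  shows "(\<Sum>p\<in>P. f p - a - b * (g p - c))
           = sum f P - real (card P) * a - b * (sum g P - real (card P) * c)"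
  by (simp add: sum_subtractf sum_distrib_left[symmetric])

lemma s5_regular_3mod4:
  assumes R: "regular_tournament V A" and n: "card V = 4 * m + 3"
  defines "N \<equiv> real (card V)"
  shows "real (s5 V A) = N * (N + 1) * (N - 1) * (N - 3) * (17 * N - 59) / 3840
                          + (\<Sum>p\<in>arcs V A. excess_3mod4 m (card (between V A p))) / 6"
proof -
  let ?x = "\<lambda>p. card (between V A p)"
  have n': "card V = 2 * (2 * m + 1) + 1" using n by simp
  have "real (s5 V A + 2 * card V * (2 * m + 1 choose 4))
          = real ((card V choose 5) + (\<Sum>p\<in>arcs V A. ?x p choose 3))"
    using s5_regular[OF R n'] by (rule arg_cong)
  then have s5: "real (s5 V A) = real (card V choose 5) - 2 * N * real (2 * m + 1 choose 4)
                                 + (\<Sum>p\<in>arcs V A. real (?x p choose 3))"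
    unfolding N_def by simp
  have "real (\<Sum>p\<in>arcs V A. ?x p) = real (card V * (2 * m + 1 choose 2))"
    using sum_card_between_regular[OF R n'] by (rule arg_cong)
  then have sum_x: "(\<Sum>p\<in>arcs V A. real (?x p)) = N * (real m * (2 * real m + 1))"
    unfolding N_def by (simp add: real_choose_2 field_simps)
  have arcs: "real (card (arcs V A)) = N * (2 * real m + 1)"
    using card_arcs_regular[OF R n'] unfolding N_def by (simp add: algebra_simps)
  have "(\<Sum>p\<in>arcs V A. excess_3mod4 m (?x p))
          = 6 * (\<Sum>p\<in>arcs V A. real (?x p choose 3))
            - real (card (arcs V A)) * (real m * (real m - 1) * (real m - 2))
            - 3 * (real m - 1)^2 * ((\<Sum>p\<in>arcs V A. real (?x p)) - real (card (arcs V A)) * real m)"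
    unfolding excess_3mod4_expand sum_diff_affine sum_distrib_left ..
  moreover have "N = 4 * real m + 3" unfolding N_def n by simp
  ultimately show ?thesis
    unfolding s5 sum_x arcs real_choose_4 real_choose_5 N_def[symmetric]
    by (simp add: field_simps power2_eq_square; simp add: algebra_simps)
qed

lemma s5_regular_1mod4:
  assumes R: "regular_tournament V A" and n: "card V = 4 * m + 1"
  defines "N \<equiv> real (card V)"
  shows "real (s5 V A) = N * (N - 1) * (17 * N ^ 3 - 93 * N ^ 2 + 127 * N - 243) / 3840
                          + (\<Sum>p\<in>arcs V A. excess_1mod4 m (card (between V A p))) / 6"
proof -
  let ?x = "\<lambda>p. card (between V A p)"
  have n': "card V = 2 * (2 * m) + 1" using n by simp
  have "real (s5 V A + 2 * card V * (2 * m choose 4))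
          = real ((card V choose 5) + (\<Sum>p\<in>arcs V A. ?x p choose 3))"
    using s5_regular[OF R n'] by (rule arg_cong)
  then have s5: "real (s5 V A) = real (card V choose 5) - 2 * N * real (2 * m choose 4)
                                 + (\<Sum>p\<in>arcs V A. real (?x p choose 3))"
    unfolding N_def by simp
  have "real (\<Sum>p\<in>arcs V A. ?x p) = real (card V * (2 * m choose 2))"
    using sum_card_between_regular[OF R n'] by (rule arg_cong)
  then have sum_x: "(\<Sum>p\<in>arcs V A. real (?x p)) = N * (real m * (2 * real m - 1))"
    unfolding N_def by (simp add: real_choose_2 field_simps)
  have arcs: "real (card (arcs V A)) = N * (2 * real m)"
    using card_arcs_regular[OF R n'] unfolding N_def by (simp add: algebra_simps)
  have "(\<Sum>p\<in>arcs V A. excess_1mod4 m (?x p))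
          = 6 * (\<Sum>p\<in>arcs V A. real (?x p choose 3))
            - real (card (arcs V A)) * ((real m - 1) * (real m - 2) * (real m - 3))
            - 3 * (real m - 1) * (real m - 2)
                * ((\<Sum>p\<in>arcs V A. real (?x p)) - real (card (arcs V A)) * (real m - 1))"
    unfolding excess_1mod4_expand sum_diff_affine sum_distrib_left ..
  moreover have "N = 4 * real m + 1" unfolding N_def n by simp
  ultimately show ?thesis
    unfolding s5 sum_x arcs real_choose_4 real_choose_5 N_def[symmetric]
    by (simp add: field_simps power2_eq_square power3_eq_cube; simp add: algebra_simps)
qed

lemma ball_arcs_iff: "(\<forall>p\<in>arcs V A. P p) \<longleftrightarrow> (\<forall>v\<in>V. \<forall>w\<in>out_set V A v. P (v, w))"
  unfolding arcs_def out_set_def by auto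

lemma doubly_regular_iff_between:
  assumes R: "regular_tournament V A" and n: "card V = 4 * m + 3"
  shows "doubly_regular V A \<longleftrightarrow> (\<forall>p\<in>arcs V A. card (between V A p) = m)"
proof -
  have n': "card V = 2 * (2 * m + 1) + 1" using n by simp
  have "regular_on (out_set V A v) A \<longleftrightarrow> (\<forall>w\<in>out_set V A v. card (between V A (v, w)) = m)"
    if v: "v \<in> V" for v
  proof -
    have "card (out_set V A v) = 2 * m + 1"
      using regular_tournament_outdeg[OF R n' v] by (simp add: outdeg_def)
    moreover have "card (between V A (v, w)) + outdeg (out_set V A v) A w + 1 = 2 * m + 1"
      if "w \<in> out_set V A v" for w
      using card_between_regular[OF R n'] that v by (simp add: arcs_def out_set_def)
    ultimately show ?thesis
      unfolding regular_on_def by force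
  qed
  then show ?thesis
    unfolding doubly_regular_def ball_arcs_iff using R n by simp
qed

lemma near_regular_on_iff:
  assumes T: "tournament S A" and S: "card S = 2 * k"
  shows "near_regular_on S A \<longleftrightarrow> (\<forall>x\<in>S. outdeg S A x = k \<or> outdeg S A x + 1 = k)"
proof -
  have fin: "finite S" using tournament_finite[OF T] .
  define P where "P = {x \<in> S. outdeg S A x = k}"
  define Q where "Q = {x \<in> S. outdeg S A x + 1 = k}"
  have PQ: "finite P" "finite Q" "P \<inter> Q = {}" "P \<union> Q \<subseteq> S"
    using fin unfolding P_def Q_def by auto
  have "near_regular_on S A \<longleftrightarrow> card P = k \<and> card Q = k"
    unfolding near_regular_on_def P_def Q_def S by simp
  also have "\<dots> \<longleftrightarrow> P \<union> Q = S"
  proof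
    assume "card P = k \<and> card Q = k"
    then have "card (P \<union> Q) = card S" using card_Un_disjoint[OF PQ(1-3)] S by simp
    then show "P \<union> Q = S" using PQ(4) fin by (simp add: card_subset_eq)
  next
    assume PQS: "P \<union> Q = S"
    then have "card P + card Q = 2 * k" using card_Un_disjoint[OF PQ(1-3)] S by simp
    moreover have "(\<Sum>x\<in>S. outdeg S A x) = (\<Sum>x\<in>P. outdeg S A x) + (\<Sum>x\<in>Q. outdeg S A x)"
      using sum.union_disjoint[OF PQ(1-3), of "outdeg S A"] PQS by simp
    moreover have "(\<Sum>x\<in>P. outdeg S A x) = (\<Sum>x\<in>P. k)"
      by (rule sum.cong) (simp_all add: P_def)
    moreover have "(\<Sum>x\<in>Q. outdeg S A x) = (\<Sum>x\<in>Q. k - 1)"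
      by (rule sum.cong) (auto simp: Q_def)
    moreover have "(\<Sum>x\<in>S. outdeg S A x) = k * (2 * k - 1)"
      using sum_outdeg[OF T] S by (simp add: choose_two)
    ultimately have "card P * k + card Q * (k - 1) = k * (2 * k - 1)" "card P + card Q = 2 * k"
      by simp_all
    then show "card P = k \<and> card Q = k"
    proof (cases k)
      case (Suc j)
      have "card Q * (k - 1) + card Q = card Q * k" "k * (2 * k - 1) + k = 2 * k * k"
        "card P * k + card Q * k = (card P + card Q) * k"
        using Suc by (simp_all add: algebra_simps)
      moreover have "(card P + card Q) * k = 2 * k * k"
        using \<open>card P + card Q = 2 * k\<close> by simp
      ultimately show ?thesis
        using \<open>card P + card Q = 2 * k\<close> \<open>card P * k + card Q * (k - 1) = k * (2 * k - 1)\<close>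
        by linarith
    qed simp
  qed
  also have "\<dots> \<longleftrightarrow> (\<forall>x\<in>S. outdeg S A x = k \<or> outdeg S A x + 1 = k)"
    using PQ(4) unfolding P_def Q_def by auto
  finally show ?thesis .
qed

lemma nearly_doubly_regular_iff_between:
  assumes R: "regular_tournament V A" and n: "card V = 4 * m + 1"
  shows "nearly_doubly_regular V A
           \<longleftrightarrow> (\<forall>p\<in>arcs V A. card (between V A p) + 1 = m \<or> card (between V A p) = m)"
proof -
  have n': "card V = 2 * (2 * m) + 1" using n by simp
  have T: "tournament V A" using regular_tournament_tournament[OF R] .
  have "near_regular_on (out_set V A v) A
          \<longleftrightarrow> (\<forall>w\<in>out_set V A v. card (between V A (v, w)) + 1 = m \<or> card (between V A (v, w)) = m)"
    if v: "v \<in> V" for v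
  proof -
    have "card (out_set V A v) = 2 * m"
      using regular_tournament_outdeg[OF R n' v] by (simp add: outdeg_def)
    moreover have "card (between V A (v, w)) + outdeg (out_set V A v) A w + 1 = 2 * m"
      if "w \<in> out_set V A v" for w
      using card_between_regular[OF R n'] that v by (simp add: arcs_def out_set_def)
    moreover have "tournament (out_set V A v) A"
      using tournament_subset[OF T] by (simp add: out_set_def)
    ultimately show ?thesis
      using near_regular_on_iff[of "out_set V A v" A m] by force
  qed
  then show ?thesis
    unfolding nearly_doubly_regular_def ball_arcs_iff using R n by simp
qed

definition every_arc_has_common_out :: "'a set \<Rightarrow> ('a \<Rightarrow> 'a \<Rightarrow> bool) \<Rightarrow> bool" where
  "every_arc_has_common_out V A \<longleftrightarrow> (\<forall>u\<in>V. \<forall>w\<in>V. A u w \<longrightarrow> (\<exists>v\<in>V. A u v \<and> A w v))"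

lemma every_arc_has_common_out_iff:
  assumes R: "regular_tournament V A" and n: "card V = 2 * d + 1"
  shows "every_arc_has_common_out V A \<longleftrightarrow> (\<forall>p\<in>arcs V A. card (between V A p) + 2 \<le> d)"
proof -
  have fin: "finite V" using tournament_finite[OF regular_tournament_tournament[OF R]] .
  have "(\<exists>v\<in>V. A u v \<and> A w v) \<longleftrightarrow> card (between V A (u, w)) + 2 \<le> d"
    if "(u, w) \<in> arcs V A" for u w
  proof -
    have "(\<exists>v\<in>V. A u v \<and> A w v) \<longleftrightarrow> outdeg (out_set V A u) A w \<noteq> 0"
      using fin unfolding outdeg_def out_set_def by auto
    then show ?thesis using card_between_regular[OF R n that] by linarith
  qed
  then show ?thesis
    unfolding every_arc_has_common_out_def by (auto simp: arcs_def)
qed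

lemma card_between_less:
  assumes R: "regular_tournament V A" and n: "card V = 2 * d + 1" and p: "p \<in> arcs V A"
  shows "card (between V A p) < d"
  using card_between_regular[OF R n, of "fst p" "snd p"] p by simp

theorem s5_bound_3mod4:
  assumes R: "regular_tournament V A" and n: "card V = 4 * m + 3"
  defines "N \<equiv> real (card V)"
  defines "b \<equiv> N * (N + 1) * (N - 1) * (N - 3) * (17 * N - 59) / 3840"
  shows "b \<le> real (s5 V A)"
    and "real (s5 V A) = b \<longleftrightarrow> doubly_regular V A \<or> card V = 7"
proof -
  let ?e = "\<lambda>p. excess_3mod4 m (card (between V A p))"
  have n': "card V = 2 * (2 * m + 1) + 1" using n by simp
  have fin: "finite (arcs V A)"
    using tournament_finite[OF regular_tournament_tournament[OF R]] by (rule finite_arcs)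
  have x: "card (between V A p) \<le> 2 * m" if "p \<in> arcs V A" for p
    using card_between_less[OF R n' that] by simp
  have s5: "real (s5 V A) = b + (\<Sum>p\<in>arcs V A. ?e p) / 6"
    using s5_regular_3mod4[OF R n] unfolding b_def N_def .
  have nonneg: "\<forall>p\<in>arcs V A. 0 \<le> ?e p"
    using excess_3mod4_sign(1)[OF x] by blast
  then show "b \<le> real (s5 V A)"
    unfolding s5 by (simp add: sum_nonneg)
  have "real (s5 V A) = b \<longleftrightarrow> (\<Sum>p\<in>arcs V A. ?e p) = 0"
    unfolding s5 by simp
  also have "\<dots> \<longleftrightarrow> (\<forall>p\<in>arcs V A. ?e p = 0)"
    using sum_nonneg_eq_0_iff[OF fin, of ?e] nonneg by blast
  also have "\<dots> \<longleftrightarrow> (\<forall>p\<in>arcs V A. card (between V A p) = m) \<or> m = 1"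
    using excess_3mod4_sign(2)[OF x] by auto
  also have "\<dots> \<longleftrightarrow> doubly_regular V A \<or> card V = 7"
    using doubly_regular_iff_between[OF R n] n by auto
  finally show "real (s5 V A) = b \<longleftrightarrow> doubly_regular V A \<or> card V = 7" .
qed

theorem s5_bound_1mod4:
  assumes R: "regular_tournament V A" and n: "card V = 4 * m + 1"
  defines "N \<equiv> real (card V)"
  defines "b \<equiv> N * (N - 1) * (17 * N ^ 3 - 93 * N ^ 2 + 127 * N - 243) / 3840"
  shows "b \<le> real (s5 V A)"
    and "real (s5 V A) = b
           \<longleftrightarrow> nearly_doubly_regular V A \<or> (card V = 9 \<and> every_arc_has_common_out V A)"
proof -
  let ?e = "\<lambda>p. excess_1mod4 m (card (between V A p))"
  have n': "card V = 2 * (2 * m) + 1" using n by simp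
  have fin: "finite (arcs V A)"
    using tournament_finite[OF regular_tournament_tournament[OF R]] by (rule finite_arcs)
  have x: "card (between V A p) < 2 * m" if "p \<in> arcs V A" for p
    using card_between_less[OF R n' that] .
  have s5: "real (s5 V A) = b + (\<Sum>p\<in>arcs V A. ?e p) / 6"
    using s5_regular_1mod4[OF R n] unfolding b_def N_def .
  have nonneg: "\<forall>p\<in>arcs V A. 0 \<le> ?e p"
    using excess_1mod4_sign(1)[OF x] by blast
  then show "b \<le> real (s5 V A)"
    unfolding s5 by (simp add: sum_nonneg)
  have "real (s5 V A) = b \<longleftrightarrow> (\<Sum>p\<in>arcs V A. ?e p) = 0"
    unfolding s5 by simp
  also have "\<dots> \<longleftrightarrow> (\<forall>p\<in>arcs V A. ?e p = 0)"
    using sum_nonneg_eq_0_iff[OF fin, of ?e] nonneg by blast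
  also have "\<dots> \<longleftrightarrow> (\<forall>p\<in>arcs V A. card (between V A p) + 1 = m \<or> card (between V A p) = m
                                     \<or> (m = 2 \<and> card (between V A p) = 0))"
    using excess_1mod4_sign(2)[OF x] by auto
  also have "\<dots> \<longleftrightarrow> nearly_doubly_regular V A \<or> (card V = 9 \<and> every_arc_has_common_out V A)"
  proof (cases "m = 2")
    case True
    have "(\<forall>p\<in>arcs V A. card (between V A p) + 1 = m \<or> card (between V A p) = m
                            \<or> (m = 2 \<and> card (between V A p) = 0))
            \<longleftrightarrow> (\<forall>p\<in>arcs V A. card (between V A p) + 2 \<le> 2 * m)"
      using x True by (intro ball_cong refl) fastforce
    moreover have "nearly_doubly_regular V A \<Longrightarrow> (\<forall>p\<in>arcs V A. card (between V A p) + 2 \<le> 2 * m)"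
      using nearly_doubly_regular_iff_between[OF R n] True by auto
    ultimately show ?thesis
      using every_arc_has_common_out_iff[OF R n'] n True by auto
  next
    case False
    then show ?thesis
      using nearly_doubly_regular_iff_between[OF R n] n by auto
  qed
  finally show "real (s5 V A) = b
                  \<longleftrightarrow> nearly_doubly_regular V A \<or> (card V = 9 \<and> every_arc_has_common_out V A)" .
qed

section \<open>Regular tournaments of order 9\<close>

lemma tourn_iso_sym:
  assumes "tourn_iso V A W B"
  shows "tourn_iso W B V A"
proof -
  obtain f where f: "bij_betw f V W" "\<forall>x\<in>V. \<forall>y\<in>V. A x y \<longleftrightarrow> B (f x) (f y)"
    using assms unfolding tourn_iso_def by blast
  have "bij_betw (inv_into V f) W V" using bij_betw_inv_into[OF f(1)] .
  moreover have "\<forall>x\<in>W. \<forall>y\<in>W. B x y \<longleftrightarrow> A (inv_into V f x) (inv_into V f y)"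
    using f bij_betw_inv_into_right[OF f(1)] calculation by (metis bij_betwE)
  ultimately show ?thesis unfolding tourn_iso_def by blast
qed

lemma tourn_iso_trans:
  assumes "tourn_iso U C V A" "tourn_iso V A W B"
  shows "tourn_iso U C W B"
proof -
  obtain f where f: "bij_betw f U V" "\<forall>x\<in>U. \<forall>y\<in>U. C x y \<longleftrightarrow> A (f x) (f y)"
    using assms(1) unfolding tourn_iso_def by blast
  obtain g where g: "bij_betw g V W" "\<forall>x\<in>V. \<forall>y\<in>V. A x y \<longleftrightarrow> B (g x) (g y)"
    using assms(2) unfolding tourn_iso_def by blast
  have "bij_betw (g \<circ> f) U W" using bij_betw_trans[OF f(1) g(1)] .
  moreover have "\<forall>x\<in>U. \<forall>y\<in>U. C x y \<longleftrightarrow> B ((g \<circ> f) x) ((g \<circ> f) y)"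
    using f g by (simp add: bij_betwE)
  ultimately show ?thesis unfolding tourn_iso_def by blast
qed

lemma tourn_iso_card: "tourn_iso V A W B \<Longrightarrow> card V = card W"
  unfolding tourn_iso_def by (metis bij_betw_same_card)

lemma tourn_iso_of_list:
  assumes "distinct ws" "set ws = W" "length ws = n"
    and "\<forall>i\<in>{0..<n}. \<forall>j\<in>{0..<n}. R i j \<longleftrightarrow> B (ws ! i) (ws ! j)"
  shows "tourn_iso {0..<n} R W B"
  unfolding tourn_iso_def
  using bij_betw_nth[OF assms(1) _ assms(2)[symmetric]] assms(3,4) by (auto simp: lessThan_atLeast0)

lemma regular_tournament_iso:
  assumes I: "tourn_iso V A W B" and R: "regular_tournament V A"
  shows "regular_tournament W B"
proof -
  obtain f where f: "bij_betw f V W" "\<forall>x\<in>V. \<forall>y\<in>V. A x y \<longleftrightarrow> B (f x) (f y)"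
    using I unfolding tourn_iso_def by blast
  have T: "tournament V A" using regular_tournament_tournament[OF R] .
  have W: "W = f ` V" and inj: "inj_on f V" using f(1) by (auto simp: bij_betw_def)
  have "tournament W B"
    unfolding tournament_def W
  proof (intro conjI ballI impI)
    show "finite (f ` V)" using tournament_finite[OF T] by simp
  next
    fix x assume "x \<in> f ` V"
    then show "\<not> B x x" using f(2) tournament_irrefl[OF T] by auto
  next
    fix x y assume "x \<in> f ` V" "y \<in> f ` V" "x \<noteq> y"
    then obtain x' y' where "x' \<in> V" "y' \<in> V" "x = f x'" "y = f y'" "x' \<noteq> y'" by blast
    then show "B x y \<longleftrightarrow> \<not> B y x" using f(2) tournament_arc_iff[OF T, of y' x'] by auto
  qed
  moreover have "outdeg W B (f x) = outdeg V A x" if "x \<in> V" for x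
  proof -
    have "out_set W B (f x) = f ` out_set V A x"
      using f(2) that unfolding W out_set_def by auto
    then show ?thesis
      unfolding outdeg_def using inj by (simp add: card_image inj_on_subset out_set_def)
  qed
  ultimately show ?thesis
    using R bij_betw_same_card[OF f(1)]
    unfolding regular_tournament_def regular_on_def W by auto
qed

lemma every_arc_has_common_out_iso:
  assumes I: "tourn_iso V A W B" and C: "every_arc_has_common_out V A"
  shows "every_arc_has_common_out W B"
proof -
  obtain f where f: "bij_betw f V W" "\<forall>x\<in>V. \<forall>y\<in>V. A x y \<longleftrightarrow> B (f x) (f y)"
    using I unfolding tourn_iso_def by blast
  have W: "W = f ` V" using f(1) by (simp add: bij_betw_def)
  show ?thesis
    unfolding every_arc_has_common_out_def W
  proof (intro ballI impI)
    fix u w assume "u \<in> f ` V" "w \<in> f ` V" "B u w"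
    then obtain u' w' where "u' \<in> V" "w' \<in> V" "u = f u'" "w = f w'" "A u' w'"
      using f(2) by auto
    then obtain v where "v \<in> V" "A u' v" "A w' v"
      using C unfolding every_arc_has_common_out_def by blast
    then show "\<exists>v\<in>f ` V. B u v \<and> B w v"
      using f(2) \<open>u' \<in> V\<close> \<open>w' \<in> V\<close> \<open>u = f u'\<close> \<open>w = f w'\<close> by auto
  qed
qed

definition in_normal_form :: "(nat \<Rightarrow> nat \<Rightarrow> bool) \<Rightarrow> bool" where
  "in_normal_form R \<longleftrightarrow> out_set {0..<9} R 0 = {1, 2, 3, 4} \<and> out_set {0..<9} R 1 = {2, 3, 4, 5}
                         \<and> R 2 3 \<and> R 3 4 \<and> R 4 2"

text \<open>Rotating the cyclic triple 2, 3, 4 and permuting 6, 7, 8 preserves the normal form. M1 is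
  in normal form; Delta.Delta and M2 are, once their vertices are listed as in the following
  labellings.\<close>
definition normal_form_symmetries :: "nat list list" where
  "normal_form_symmetries =
     [[0, 1] @ \<tau> @ [5] @ \<sigma>. \<tau> \<leftarrow> [[2, 3, 4], [3, 4, 2], [4, 2, 3]],
        \<sigma> \<leftarrow> [[6, 7, 8], [6, 8, 7], [7, 6, 8], [7, 8, 6], [8, 6, 7], [8, 7, 6]]]"

definition DD_normal_labelling :: "(nat \<times> nat) list" where
  "DD_normal_labelling = [(0, 0), (0, 1), (1, 0), (1, 1), (1, 2), (0, 2), (2, 0), (2, 2), (2, 1)]"

definition M2_normal_labelling :: "nat list" where
  "M2_normal_labelling = [4, 3, 7, 5, 8, 1, 6, 2, 0]"

lemma upto_nine: "{0..<9::nat} = {0, 1, 2, 3, 4, 5, 6, 7, 8}"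
  by (auto simp: eval_nat_numeral less_Suc_eq)

lemma int_card_filter: "finite S \<Longrightarrow> int (card {x\<in>S. P x}) = (\<Sum>x\<in>S. if P x then 1 else 0)"
  by (simp add: sum.If_cases Int_def)

text \<open>The normal form leaves 18 arcs open. Its 38 completions to a regular tournament in which
  every arc has a common out-neighbour form three orbits under the symmetries; finding them is a
  propositional problem, left to the SMT solver.\<close>
lemma normal_form_completions:
  fixes R :: "nat \<Rightarrow> nat \<Rightarrow> bool"
  assumes R: "regular_tournament {0..<9} R" and C: "every_arc_has_common_out {0..<9} R"
    and N: "in_normal_form R"
  shows "\<exists>g\<in>set normal_form_symmetries.
           (\<forall>i\<in>{0..<9}. \<forall>j\<in>{0..<9}.
              R (g ! i) (g ! j) \<longleftrightarrow> DD_A (DD_normal_labelling ! i) (DD_normal_labelling ! j))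
         \<or> (\<forall>i\<in>{0..<9}. \<forall>j\<in>{0..<9}. R (g ! i) (g ! j) \<longleftrightarrow> mat_rel M1 i j)
         \<or> (\<forall>i\<in>{0..<9}. \<forall>j\<in>{0..<9}.
              R (g ! i) (g ! j) \<longleftrightarrow> mat_rel M2 (M2_normal_labelling ! i) (M2_normal_labelling ! j))"
proof -
  have T: "tournament {0..<9} R" using regular_tournament_tournament[OF R] .
  have "\<forall>x\<in>{0..<9}. card {y \<in> {0..<9}. R x y} = 4"
    using regular_tournament_outdeg[OF R, of 4] unfolding outdeg_def out_set_def by simp
  then have "\<forall>x\<in>{0..<9}. (\<Sum>y\<in>{0..<9}. if R x y then 1 else 0) = (4::int)"
    using int_card_filter[OF finite_atLeastLessThan] by (metis of_nat_numeral)
  note outdeg = this[unfolded upto_nine, simplified]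
  have "\<forall>x\<in>{0..<9}. \<not> R x x" "\<forall>x\<in>{0..<9}. \<forall>y\<in>{0..<9}. x \<noteq> y \<longrightarrow> (R x y \<longleftrightarrow> \<not> R y x)"
    using T unfolding tournament_def by blast+
  note tournament = this[unfolded upto_nine, simplified]
  note common = C[unfolded every_arc_has_common_out_def upto_nine, simplified]
  have "\<forall>j\<in>{0..<9}. R 0 j \<longleftrightarrow> j \<in> {1, 2, 3, 4}" "\<forall>j\<in>{0..<9}. R 1 j \<longleftrightarrow> j \<in> {2, 3, 4, 5}"
    using N unfolding in_normal_form_def out_set_def set_eq_iff mem_Collect_eq by blast+
  note normal = this[unfolded upto_nine, simplified]
  have cycle: "R 2 3" "R 3 4" "R 4 2" using N by (simp_all add: in_normal_form_def)
  show ?thesis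
    unfolding normal_form_symmetries_def DD_normal_labelling_def M2_normal_labelling_def
    by (simp add: upto_nine DD_A_def cyc3_def mat_rel_def M1_def M2_def)
      (use tournament outdeg common normal cycle in \<open>smt (z3)\<close>)
qed

lemma normal_form_iso:
  fixes R :: "nat \<Rightarrow> nat \<Rightarrow> bool"
  assumes "regular_tournament {0..<9} R" "every_arc_has_common_out {0..<9} R" "in_normal_form R"
  shows "tourn_iso {0..<9} R DD_V DD_A \<or> tourn_iso {0..<9} R {0..<9} (mat_rel M1)
           \<or> tourn_iso {0..<9} R {0..<9} (mat_rel M2)"
proof -
  obtain g where g: "g \<in> set normal_form_symmetries"
    and completion:
      "(\<forall>i\<in>{0..<9}. \<forall>j\<in>{0..<9}.
          R (g ! i) (g ! j) \<longleftrightarrow> DD_A (DD_normal_labelling ! i) (DD_normal_labelling ! j))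
       \<or> (\<forall>i\<in>{0..<9}. \<forall>j\<in>{0..<9}. R (g ! i) (g ! j) \<longleftrightarrow> mat_rel M1 ([0..<9] ! i) ([0..<9] ! j))
       \<or> (\<forall>i\<in>{0..<9}. \<forall>j\<in>{0..<9}.
          R (g ! i) (g ! j) \<longleftrightarrow> mat_rel M2 (M2_normal_labelling ! i) (M2_normal_labelling ! j))"
    using normal_form_completions[OF assms] by auto
  let ?Rg = "\<lambda>i j. R (g ! i) (g ! j)"
  have "distinct g" "set g = {0..<9}" "length g = 9"
    using g unfolding normal_form_symmetries_def upto_nine by auto
  then have "tourn_iso {0..<9} ?Rg {0..<9} R"
    by (rule tourn_iso_of_list) simp
  then have relabel: "tourn_iso {0..<9} R {0..<9} ?Rg"
    by (rule tourn_iso_sym)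
  have DD: "distinct DD_normal_labelling" "set DD_normal_labelling = DD_V"
    "length DD_normal_labelling = 9"
    unfolding DD_normal_labelling_def DD_V_def
    by (simp_all add: numeral_2_eq_2 atLeast0_atMost_Suc insert_commute)
  have M1: "distinct [0..<9]" "set [0..<9] = {0..<9}" "length [0..<9] = 9"
    by simp_all
  have M2: "distinct M2_normal_labelling" "set M2_normal_labelling = {0..<9}"
    "length M2_normal_labelling = 9"
    by (auto simp: M2_normal_labelling_def upto_nine)
  have "tourn_iso {0..<9} ?Rg DD_V DD_A \<or> tourn_iso {0..<9} ?Rg {0..<9} (mat_rel M1)
          \<or> tourn_iso {0..<9} ?Rg {0..<9} (mat_rel M2)"
    using completion tourn_iso_of_list[OF DD, of ?Rg DD_A]
      tourn_iso_of_list[OF M1, of ?Rg "mat_rel M1"] tourn_iso_of_list[OF M2, of ?Rg "mat_rel M2"]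
    by blast
  then show ?thesis
    by (elim disjE) (blast dest: tourn_iso_trans[OF relabel])+
qed

lemma sinkless_triple_is_cycle:
  assumes T: "tournament S A" and S: "card S = 3" and sinkless: "\<forall>t\<in>S. \<exists>s\<in>S. A t s"
  obtains p q r where "S = {p, q, r}" "A p q" "A q r" "A r p"
proof -
  obtain x y z where S: "S = {x, y, z}" "x \<noteq> y" "y \<noteq> z" "x \<noteq> z"
    using S by (auto simp: card_3_iff)
  have irrefl: "\<not> A t t" if "t \<in> S" for t using tournament_irrefl[OF T that] .
  have arc: "A t u \<longleftrightarrow> \<not> A u t" if "t \<in> S" "u \<in> S" "t \<noteq> u" for t u
    using tournament_arc_iff[OF T that(2,1)] that(3) by blast
  show ?thesis
  proof (cases "A x y")
    case True
    then have "A y z" "A z x" using sinkless irrefl arc S by (metis insert_iff singletonD)+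
    with True show ?thesis using that S(1) by blast
  next
    case False
    then have "A y x" "A x z" "A z y" using sinkless irrefl arc S by (metis insert_iff singletonD)+
    then show ?thesis using that[of x z y] S(1) by (simp add: insert_commute)
  qed
qed

lemma arc_with_empty_between:
  assumes R: "regular_tournament V A" and n: "card V = 9"
    and C: "every_arc_has_common_out V A" and not_ndr: "\<not> nearly_doubly_regular V A"
  obtains v0 v1 where "v0 \<in> V" "v1 \<in> V" "A v0 v1" "between V A (v0, v1) = {}"
proof -
  have n': "card V = 2 * 4 + 1" "card V = 4 * 2 + 1" using n by simp_all
  obtain v0 v1 where "(v0, v1) \<in> arcs V A" "card (between V A (v0, v1)) + 1 \<noteq> 2"
    "card (between V A (v0, v1)) \<noteq> 2"
    using not_ndr unfolding nearly_doubly_regular_iff_between[OF R n'(2)] by auto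
  moreover have "\<forall>p\<in>arcs V A. card (between V A p) + 2 \<le> 4"
    using C every_arc_has_common_out_iff[OF R n'(1)] by simp
  ultimately have "v0 \<in> V" "v1 \<in> V" "A v0 v1" "card (between V A (v0, v1)) = 0"
    unfolding arcs_def by fastforce+
  moreover have "finite V" using tournament_finite[OF regular_tournament_tournament[OF R]] .
  ultimately show ?thesis using that by (simp add: between_def)
qed

lemma out_sets_at_empty_arc:
  assumes R: "regular_tournament V A" and n: "card V = 9" and C: "every_arc_has_common_out V A"
    and v01: "v0 \<in> V" "v1 \<in> V" "A v0 v1" and empty: "between V A (v0, v1) = {}"
  obtains p q r a where "out_set V A v0 = {v1, p, q, r}" "out_set V A v1 = {p, q, r, a}"
    "a \<notin> {p, q, r}" "A p q" "A q r" "A r p"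
proof -
  have T: "tournament V A" using regular_tournament_tournament[OF R] .
  have out: "card (out_set V A v) = 4" if "v \<in> V" for v
    using regular_tournament_outdeg[OF R _ that, of 4] n by (simp add: outdeg_def)
  define S where "S = out_set V A v0 - {v1}"
  have S_out: "t \<in> V" "A v0 t" "t \<noteq> v1" if "t \<in> S" for t
    using that unfolding S_def out_set_def by auto
  have v1_S: "A v1 t" if "t \<in> S" for t
  proof -
    have "\<not> A t v1" using empty S_out[OF that] unfolding between_def by auto
    then show ?thesis
      using tournament_arc_iff[OF T S_out(1)[OF that] v01(2) S_out(3)[OF that]] by simp
  qed
  have "\<forall>t\<in>S. \<exists>s\<in>S. A t s"
  proof
    fix t assume "t \<in> S"
    then obtain s where "s \<in> V" "A v0 s" "A t s"
      using C S_out v01 unfolding every_arc_has_common_out_def by blast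
    moreover have "s \<noteq> v1"
      using \<open>A t s\<close> v1_S[OF \<open>t \<in> S\<close>] tournament_asym[OF T] S_out[OF \<open>t \<in> S\<close>] v01 by blast
    ultimately show "\<exists>s\<in>S. A t s" unfolding S_def out_set_def by auto
  qed
  moreover have "card S = 3"
    using out[OF v01(1)] v01 unfolding S_def by (simp add: out_set_def)
  ultimately obtain p q r where pqr: "S = {p, q, r}" "A p q" "A q r" "A r p"
    using sinkless_triple_is_cycle tournament_subset[OF T] S_out by (metis subsetI)
  have "{p, q, r} \<subseteq> out_set V A v1" "card {p, q, r} = 3"
    using v1_S S_out \<open>card S = 3\<close> unfolding pqr(1) out_set_def by auto
  then have "card (out_set V A v1 - {p, q, r}) = 1"
    using out[OF v01(2)] by (simp add: card_Diff_subset)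
  then obtain a where "out_set V A v1 - {p, q, r} = {a}" by (auto simp: card_1_singleton_iff)
  then have "out_set V A v1 = {p, q, r, a}" "a \<notin> {p, q, r}"
    using \<open>{p, q, r} \<subseteq> out_set V A v1\<close> by auto
  moreover have "out_set V A v0 = {v1, p, q, r}"
    using pqr(1) v01 unfolding S_def out_set_def by auto
  ultimately show ?thesis using that pqr by blast
qed

lemma normal_form_of_list:
  assumes ws: "distinct ws" "set ws = V" "length ws = 9"
    and out0: "out_set V A (ws ! 0) = (!) ws ` {1, 2, 3, 4}"
    and out1: "out_set V A (ws ! 1) = (!) ws ` {2, 3, 4, 5}"
    and cycle: "A (ws ! 2) (ws ! 3)" "A (ws ! 3) (ws ! 4)" "A (ws ! 4) (ws ! 2)"
  shows "tourn_iso {0..<9} (\<lambda>i j. A (ws ! i) (ws ! j)) V A"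
    and "in_normal_form (\<lambda>i j. A (ws ! i) (ws ! j))"
proof -
  let ?Rn = "\<lambda>i j. A (ws ! i) (ws ! j)"
  show "tourn_iso {0..<9} ?Rn V A"
    using tourn_iso_of_list[OF ws, of ?Rn A] by blast
  have out_Rn: "out_set {0..<9} ?Rn i = {j \<in> {0..<9}. ws ! j \<in> (!) ws ` K}"
    if "out_set V A (ws ! i) = (!) ws ` K" for i K
    using ws that[symmetric] unfolding out_set_def by auto
  have select: "{j \<in> {0..<9}. ws ! j \<in> (!) ws ` K} = K" if "K \<subseteq> {0..<9}" for K
    using that ws by (force simp: nth_eq_iff_index_eq)
  show "in_normal_form ?Rn"
    unfolding in_normal_form_def
    using out_Rn[OF out0] out_Rn[OF out1] select[of "{1, 2, 3, 4}"] select[of "{2, 3, 4, 5}"] cycle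
    by simp
qed

lemma exists_normal_form:
  assumes R: "regular_tournament V A" and n: "card V = 9"
    and C: "every_arc_has_common_out V A" and not_ndr: "\<not> nearly_doubly_regular V A"
  obtains Rn :: "nat \<Rightarrow> nat \<Rightarrow> bool" where "tourn_iso {0..<9} Rn V A" "in_normal_form Rn"
proof -
  have T: "tournament V A" using regular_tournament_tournament[OF R] .
  obtain v0 v1 where v01: "v0 \<in> V" "v1 \<in> V" "A v0 v1" "between V A (v0, v1) = {}"
    by (rule arc_with_empty_between[OF R n C not_ndr])
  then obtain p q r a where out0: "out_set V A v0 = {v1, p, q, r}"
    and out1: "out_set V A v1 = {p, q, r, a}" and a: "a \<notin> {p, q, r}"
    and cycle: "A p q" "A q r" "A r p"
    by (rule out_sets_at_empty_arc[OF R n C])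
  have "p \<in> V" "q \<in> V" "r \<in> V" "a \<in> V" "A v0 p" "A v0 q" "A v0 r" "A v1 p" "A v1 q" "A v1 r" "A v1 a"
    using out0 out1 unfolding out_set_def by auto
  then have "distinct [v0, v1, p, q, r, a]"
    using v01 a cycle tournament_irrefl[OF T] tournament_asym[OF T] by auto
  moreover obtain rest where "distinct rest" "set rest = V - {v0, v1, p, q, r, a}"
    using finite_distinct_list tournament_finite[OF T] by (metis finite_Diff)
  moreover define ws where "ws = [v0, v1, p, q, r, a] @ rest"
  ultimately have ws: "distinct ws" "set ws = V"
    using v01 \<open>p \<in> V\<close> \<open>q \<in> V\<close> \<open>r \<in> V\<close> \<open>a \<in> V\<close> by auto
  moreover have "length ws = 9" using ws n distinct_card by metis
  moreover have "ws ! 0 = v0" "ws ! 1 = v1" "ws ! 2 = p" "ws ! 3 = q" "ws ! 4 = r" "ws ! 5 = a"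
    by (simp_all add: ws_def)
  ultimately show ?thesis
    using normal_form_of_list[of ws V A] that out0 out1 cycle by auto
qed

lemma every_arc_has_common_out_DD: "every_arc_has_common_out DD_V DD_A"
  unfolding every_arc_has_common_out_def DD_V_def
  by (simp add: numeral_2_eq_2 atLeast0_atMost_Suc DD_A_def cyc3_def)

lemma every_arc_has_common_out_M1: "every_arc_has_common_out {0..<9} (mat_rel M1)"
  unfolding every_arc_has_common_out_def upto_nine by (simp add: mat_rel_def M1_def)

lemma every_arc_has_common_out_M2: "every_arc_has_common_out {0..<9} (mat_rel M2)"
  unfolding every_arc_has_common_out_def upto_nine by (simp add: mat_rel_def M2_def)

theorem regular_nine_common_out_iff:
  assumes R: "regular_tournament V A" and n: "card V = 9"
  shows "every_arc_has_common_out V A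
           \<longleftrightarrow> nearly_doubly_regular V A \<or> tourn_iso V A DD_V DD_A
               \<or> tourn_iso V A {0..<9} (mat_rel M1) \<or> tourn_iso V A {0..<9} (mat_rel M2)"
proof
  assume C: "every_arc_has_common_out V A"
  show "nearly_doubly_regular V A \<or> tourn_iso V A DD_V DD_A
          \<or> tourn_iso V A {0..<9} (mat_rel M1) \<or> tourn_iso V A {0..<9} (mat_rel M2)"
  proof (cases "nearly_doubly_regular V A")
    case False
    then obtain Rn :: "nat \<Rightarrow> nat \<Rightarrow> bool"
      where iso: "tourn_iso {0..<9} Rn V A" and normal: "in_normal_form Rn"
      by (rule exists_normal_form[OF R n C])
    have "regular_tournament {0..<9} Rn" "every_arc_has_common_out {0..<9} Rn"
      using regular_tournament_iso[OF tourn_iso_sym[OF iso] R]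
        every_arc_has_common_out_iso[OF tourn_iso_sym[OF iso] C] by -
    from normal_form_iso[OF this normal]
    have "tourn_iso V A DD_V DD_A \<or> tourn_iso V A {0..<9} (mat_rel M1)
            \<or> tourn_iso V A {0..<9} (mat_rel M2)"
      by (elim disjE) (blast dest: tourn_iso_trans[OF tourn_iso_sym[OF iso]])+
    then show ?thesis by blast
  qed simp
next
  have n': "card V = 4 * 2 + 1" "card V = 2 * 4 + 1" using n by simp_all
  assume "nearly_doubly_regular V A \<or> tourn_iso V A DD_V DD_A
            \<or> tourn_iso V A {0..<9} (mat_rel M1) \<or> tourn_iso V A {0..<9} (mat_rel M2)"
  then show "every_arc_has_common_out V A"
  proof (elim disjE)
    assume "nearly_doubly_regular V A"
    then show ?thesis
      using nearly_doubly_regular_iff_between[OF R n'(1)] every_arc_has_common_out_iff[OF R n'(2)]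
      by auto
  qed (use every_arc_has_common_out_iso[OF tourn_iso_sym] every_arc_has_common_out_DD
         every_arc_has_common_out_M1 every_arc_has_common_out_M2 in blast)+
qed

theorem proposition2:
  fixes V :: "'a set" and A :: "'a \<Rightarrow> 'a \<Rightarrow> bool"
  assumes "regular_tournament V A"
  shows "(card V mod 4 = 3 \<longrightarrow>
            (let n = real (card V);
                 b = n * (n + 1) * (n - 1) * (n - 3) * (17 * n - 59) / 3840
             in b \<le> real (s5 V A) \<and>
                (real (s5 V A) = b \<longleftrightarrow> doubly_regular V A \<or> card V = 7)))
       \<and> (card V mod 4 = 1 \<longrightarrow>
            (let n = real (card V);
                 b = n * (n - 1) * (17 * n ^ 3 - 93 * n ^ 2 + 127 * n - 243) / 3840
             in b \<le> real (s5 V A) \<and>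
                (real (s5 V A) = b \<longleftrightarrow>
                   nearly_doubly_regular V A \<or> tourn_iso V A DD_V DD_A \<or>
                   tourn_iso V A {0..<9} (mat_rel M1) \<or>
                   tourn_iso V A {0..<9} (mat_rel M2))))"
proof -
  have "card DD_V = 9" by (simp add: DD_V_def)
  then have "nearly_doubly_regular V A \<or> (card V = 9 \<and> every_arc_has_common_out V A)
               \<longleftrightarrow> nearly_doubly_regular V A \<or> tourn_iso V A DD_V DD_A
                   \<or> tourn_iso V A {0..<9} (mat_rel M1) \<or> tourn_iso V A {0..<9} (mat_rel M2)"
    using regular_nine_common_out_iff[OF assms] tourn_iso_card[of V A DD_V DD_A]
      tourn_iso_card[of V A "{0..<9}" "mat_rel M1"] tourn_iso_card[of V A "{0..<9}" "mat_rel M2"]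
    by auto
  moreover have "card V mod 4 = 3 \<Longrightarrow> card V = 4 * (card V div 4) + 3"
    and "card V mod 4 = 1 \<Longrightarrow> card V = 4 * (card V div 4) + 1"
    by presburger+
  ultimately show ?thesis
    unfolding Let_def
    using s5_bound_3mod4[OF assms, of "card V div 4"] s5_bound_1mod4[OF assms, of "card V div 4"]
    by auto
qed

end
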